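(* Let $x,y\in\mathbb{H}^2$, let $e_1=(1,0)$, $e_2=(0,1)$, and define $$x'=\tfrac{x+y}{2}-\tfrac{|x-y|}{2}e_2,\quad y'=\tfrac{x+y}{2}+\tfrac{|x-y|}{2}e_2,\quad x''=\tfrac{x+y}{2}-\tfrac{|x-y|}{2}e_1,\quad y''=\tfrac{x+y}{2}+\tfrac{|x-y|}{2}e_1,$$ and assume $x'\in\mathbb{H}^2$ (so that $x',y',x'',y''\in\mathbb{H}^2$). Then $$\tilde\tau_{\mathbb{H}^2}(x'',y'')\le\tilde\tau_{\mathbb{H}^2}(x,y)\le\tilde\tau_{\mathbb{H}^2}(x',y').$$
   Context: $\mathbb{H}^2=\{(x_1,x_2)\in\mathbb{R}^2:x_2>0\}$ is the upper half plane. For a proper subdomain $D\subsetneq\mathbb{R}^n$ and $x,y\in D$, $\tilde\tau_D(x,y)=\log\big(1+\sup_{p\in\partial D}\frac{|x-y|}{\sqrt{|x-p||y-p|}}\big)$ (the scale invariant Cassinian metric). *)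

theory Defs
  imports "HOL-Analysis.Analysis"
begin

definition upper_half_plane :: "(real^2) set" where
  "upper_half_plane = {x. x $ 2 > 0}"

definition sic_metric :: "('a::euclidean_space) set \<Rightarrow> 'a \<Rightarrow> 'a \<Rightarrow> real" where
  "sic_metric D x y =
     ln (1 + (SUP p\<in>frontier D. dist x y / sqrt (dist x p * dist y p)))"

definition e1 :: "real^2" where "e1 = axis 1 1"
definition e2 :: "real^2" where "e2 = axis 2 1"

end

theory Submission
  imports Defs
begin

text \<open>Write the pair as \<open>m \<mp> v\<close>, let \<open>h\<close> be the height of \<open>m\<close> and \<open>q\<close> the boundary point below \<open>m\<close>.
  For \<open>p\<close> on the boundary, Cauchy--Schwarz gives
  \<open>|m - v - p| |m + v - p| \<ge> |m - p|\<^sup>2 - |v|\<^sup>2 \<ge> h\<^sup>2 - |v|\<^sup>2\<close>, while at \<open>q\<close> the product is at most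
  \<open>h\<^sup>2 + |v|\<^sup>2\<close>. For the vertical pair the lower bound is attained at \<open>q\<close>; for the horizontal pair
  the product never drops below \<open>h\<^sup>2 + |v|\<^sup>2\<close>. All three pairs are at distance \<open>2 |v|\<close>, so the
  suprema over the boundary are ordered as claimed.\<close>

lemma norm_diff_squared_mult_norm_add_squared:
  fixes w v :: "'a::real_inner"
  shows "(norm (w - v) * norm (w + v))\<^sup>2 = ((norm w)\<^sup>2 + (norm v)\<^sup>2)\<^sup>2 - 4 * (w \<bullet> v)\<^sup>2"
proof -
  have "(norm (w - v))\<^sup>2 = (norm w)\<^sup>2 + (norm v)\<^sup>2 - 2 * (w \<bullet> v)"
    and "(norm (w + v))\<^sup>2 = (norm w)\<^sup>2 + (norm v)\<^sup>2 + 2 * (w \<bullet> v)"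
    by (simp_all add: power2_norm_eq_inner inner_diff inner_add inner_commute)
  then show ?thesis
    by (simp only: power_mult_distrib) (simp add: power2_eq_square algebra_simps)
qed

lemma abs_norm_squared_diff_le_norm_diff_mult_norm_add:
  fixes w v :: "'a::real_inner"
  shows "\<bar>(norm w)\<^sup>2 - (norm v)\<^sup>2\<bar> \<le> norm (w - v) * norm (w + v)"
proof -
  have "(w \<bullet> v)\<^sup>2 \<le> (norm w)\<^sup>2 * (norm v)\<^sup>2"
    using Cauchy_Schwarz_ineq[of w v] by (simp add: power2_norm_eq_inner)
  then have "\<bar>(norm w)\<^sup>2 - (norm v)\<^sup>2\<bar>\<^sup>2 \<le> (norm (w - v) * norm (w + v))\<^sup>2"
    unfolding norm_diff_squared_mult_norm_add_squared by (simp add: power2_eq_square algebra_simps)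
  then show ?thesis
    by (rule power2_le_imp_le) simp
qed

lemma norm_diff_mult_norm_add_le:
  fixes w v :: "'a::real_inner"
  shows "norm (w - v) * norm (w + v) \<le> (norm w)\<^sup>2 + (norm v)\<^sup>2"
proof -
  have "(norm (w - v) * norm (w + v))\<^sup>2 \<le> ((norm w)\<^sup>2 + (norm v)\<^sup>2)\<^sup>2"
    unfolding norm_diff_squared_mult_norm_add_squared by simp
  then show ?thesis
    by (rule power2_le_imp_le) simp
qed

lemma norm_diff_mult_norm_add_collinear:
  fixes w v :: "'a::real_inner"
  assumes "\<bar>w \<bullet> v\<bar> = norm w * norm v"
  shows "norm (w - v) * norm (w + v) = \<bar>(norm w)\<^sup>2 - (norm v)\<^sup>2\<bar>"
proof -
  have "(norm (w - v) * norm (w + v))\<^sup>2 = \<bar>(norm w)\<^sup>2 - (norm v)\<^sup>2\<bar>\<^sup>2"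
    unfolding norm_diff_squared_mult_norm_add_squared power2_abs
    using assms by (simp add: power2_eq_square algebra_simps flip: abs_mult_self_eq[of "w \<bullet> v"])
  then show ?thesis
    by (metis abs_ge_zero norm_ge_zero power2_eq_iff_nonneg zero_le_mult_iff)
qed

lemma sic_metric_le_sic_metric:
  fixes a b c d q :: "'a::euclidean_space"
  assumes "dist a b = dist c d" and "q \<in> frontier D"
    and "0 < k" and "\<And>p. p \<in> frontier D \<Longrightarrow> k \<le> dist a p * dist b p"
    and "dist c q * dist d q \<le> k"
    and "0 < k'" and "\<And>p. p \<in> frontier D \<Longrightarrow> k' \<le> dist c p * dist d p"
  shows "sic_metric D a b \<le> sic_metric D c d"
proof -
  define G where "G u v p = dist u v / sqrt (dist u p * dist v p)" for u v p :: 'a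
  have bound: "G a b p \<le> dist a b / sqrt k" if "p \<in> frontier D" for p
    unfolding G_def using assms(3) assms(4)[OF that] by (intro divide_left_mono) auto
  then have "(SUP p\<in>frontier D. G a b p) \<le> dist a b / sqrt k"
    using assms(2) by (intro cSUP_least) auto
  also have "\<dots> \<le> G c d q"
    unfolding G_def assms(1) using assms(5,6) assms(7)[OF assms(2)]
    by (intro divide_left_mono) auto
  also have "\<dots> \<le> (SUP p\<in>frontier D. G c d p)"
  proof (rule cSUP_upper[OF assms(2)])
    have "G c d p \<le> dist c d / sqrt k'" if "p \<in> frontier D" for p
      unfolding G_def using assms(6) assms(7)[OF that] by (intro divide_left_mono) auto
    then show "bdd_above (G c d ` frontier D)"
      by (rule bdd_aboveI2)
  qed
  finally have "(SUP p\<in>frontier D. G a b p) \<le> (SUP p\<in>frontier D. G c d p)" .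
  moreover have "0 \<le> (SUP p\<in>frontier D. G a b p)"
  proof (rule order_trans)
    show "G a b q \<le> (SUP p\<in>frontier D. G a b p)"
      by (rule cSUP_upper[OF assms(2) bdd_aboveI2[OF bound]])
  qed (simp add: G_def)
  ultimately show ?thesis
    unfolding sic_metric_def G_def by simp
qed

lemma dist_diff_add: "dist (m - v) (m + v) = 2 * norm (v :: 'a::real_normed_vector)"
  by (simp add: dist_norm norm_minus_commute flip: scaleR_2)

lemma frontier_upper_half_plane: "frontier upper_half_plane = {p. p $ 2 = 0}"
proof -
  have "upper_half_plane = {x. e2 \<bullet> x > 0}" and "e2 \<bullet> x = x $ 2" for x :: "real^2"
    by (simp_all add: upper_half_plane_def e2_def inner_axis')
  moreover have "e2 \<noteq> 0"
    by (simp add: e2_def axis_eq_0_iff)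
  ultimately show ?thesis
    using frontier_halfspace_gt[of e2 0] by simp
qed

lemma power2_norm_vec2: "(norm (w :: real^2))\<^sup>2 = (w $ 1)\<^sup>2 + (w $ 2)\<^sup>2"
  by (simp add: norm_vec_def L2_set_def sum_2)

lemma inner_vec2: "(w :: real^2) \<bullet> v = w $ 1 * v $ 1 + w $ 2 * v $ 2"
  by (simp add: inner_vec_def sum_2)

lemma dist_mult_dist_ge_on_boundary:
  fixes m v p :: "real^2"
  assumes "p $ 2 = 0"
  shows "(m $ 2)\<^sup>2 - (norm v)\<^sup>2 \<le> dist (m - v) p * dist (m + v) p"
proof -
  have "\<bar>m $ 2\<bar> \<le> norm (m - p)"
    using component_le_norm_cart[of "m - p" 2] assms by simp
  then have "(m $ 2)\<^sup>2 \<le> (norm (m - p))\<^sup>2"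
    by (metis power2_abs power_mono abs_ge_zero)
  also have "(norm (m - p))\<^sup>2 - (norm v)\<^sup>2 \<le> norm (m - p - v) * norm (m - p + v)"
    using abs_norm_squared_diff_le_norm_diff_mult_norm_add[of "m - p" v] by linarith
  finally show ?thesis
    by (simp add: dist_norm algebra_simps)
qed

lemma dist_mult_dist_ge_on_boundary_horizontal:
  fixes m p :: "real^2"
  assumes "p $ 2 = 0" and "\<bar>c\<bar> \<le> \<bar>m $ 2\<bar>"
  shows "(m $ 2)\<^sup>2 + c\<^sup>2 \<le> dist (m - c *\<^sub>R e1) p * dist (m + c *\<^sub>R e1) p"
proof -
  define u where "u = m $ 1 - p $ 1"
  have "c\<^sup>2 \<le> (m $ 2)\<^sup>2"
    using assms(2) by (simp add: abs_le_square_iff)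
  then have "0 \<le> u\<^sup>2 * (u\<^sup>2 + 2 * ((m $ 2)\<^sup>2 - c\<^sup>2))"
    by simp
  then have "((m $ 2)\<^sup>2 + c\<^sup>2)\<^sup>2 \<le> (u\<^sup>2 + (m $ 2)\<^sup>2 + c\<^sup>2)\<^sup>2 - 4 * (u * c)\<^sup>2"
    by (simp add: power2_eq_square algebra_simps)
  also have "\<dots> = (norm (m - p - c *\<^sub>R e1) * norm (m - p + c *\<^sub>R e1))\<^sup>2"
    unfolding norm_diff_squared_mult_norm_add_squared power2_norm_vec2 inner_vec2
    using assms(1) by (simp add: u_def e1_def axis_def)
  finally have "(m $ 2)\<^sup>2 + c\<^sup>2 \<le> norm (m - p - c *\<^sub>R e1) * norm (m - p + c *\<^sub>R e1)"
    by (rule power2_le_imp_le) simp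
  then show ?thesis
    by (simp add: dist_norm algebra_simps)
qed

lemma dist_mult_dist_le_at_foot:
  fixes m v :: "real^2"
  defines "q \<equiv> m - (m $ 2) *\<^sub>R e2"
  shows "dist (m - v) q * dist (m + v) q \<le> (m $ 2)\<^sup>2 + (norm v)\<^sup>2"
  using norm_diff_mult_norm_add_le[of "(m $ 2) *\<^sub>R e2" v]
  by (simp add: q_def dist_norm e2_def algebra_simps)

lemma dist_mult_dist_at_foot_vertical:
  fixes m :: "real^2"
  defines "q \<equiv> m - (m $ 2) *\<^sub>R e2"
  shows "dist (m - c *\<^sub>R e2) q * dist (m + c *\<^sub>R e2) q = \<bar>(m $ 2)\<^sup>2 - c\<^sup>2\<bar>"
  using norm_diff_mult_norm_add_collinear[of "(m $ 2) *\<^sub>R e2" "c *\<^sub>R e2"]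
  by (simp add: q_def dist_norm e2_def abs_mult algebra_simps)

lemma sic_metric_upper_half_plane_horizontal_le:
  fixes m v :: "real^2"
  assumes "norm v < m $ 2"
  shows "sic_metric upper_half_plane (m - norm v *\<^sub>R e1) (m + norm v *\<^sub>R e1)
           \<le> sic_metric upper_half_plane (m - v) (m + v)"
proof (rule sic_metric_le_sic_metric)
  show "m - (m $ 2) *\<^sub>R e2 \<in> frontier upper_half_plane"
    by (simp add: frontier_upper_half_plane e2_def)
  show "(m $ 2)\<^sup>2 + (norm v)\<^sup>2 \<le> dist (m - norm v *\<^sub>R e1) p * dist (m + norm v *\<^sub>R e1) p"
    if "p \<in> frontier upper_half_plane" for p
    using dist_mult_dist_ge_on_boundary_horizontal[of p "norm v" m] that assms
    by (simp add: frontier_upper_half_plane)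
  show "dist (m - v) (m - (m $ 2) *\<^sub>R e2) * dist (m + v) (m - (m $ 2) *\<^sub>R e2)
          \<le> (m $ 2)\<^sup>2 + (norm v)\<^sup>2"
    by (rule dist_mult_dist_le_at_foot)
  show "0 < (m $ 2)\<^sup>2 - (norm v)\<^sup>2"
    using assms by (simp add: power_strict_mono)
  show "(m $ 2)\<^sup>2 - (norm v)\<^sup>2 \<le> dist (m - v) p * dist (m + v) p"
    if "p \<in> frontier upper_half_plane" for p
    using dist_mult_dist_ge_on_boundary that by (simp add: frontier_upper_half_plane)
  show "0 < (m $ 2)\<^sup>2 + (norm v)\<^sup>2"
    using le_less_trans[OF norm_ge_zero assms] by (simp add: add_pos_nonneg)
qed (simp add: dist_diff_add e1_def)

lemma sic_metric_upper_half_plane_le_vertical: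
  fixes m v :: "real^2"
  assumes "norm v < m $ 2"
  shows "sic_metric upper_half_plane (m - v) (m + v)
           \<le> sic_metric upper_half_plane (m - norm v *\<^sub>R e2) (m + norm v *\<^sub>R e2)"
proof -
  have lower: "(m $ 2)\<^sup>2 - (norm u)\<^sup>2 \<le> dist (m - u) p * dist (m + u) p"
    if "p \<in> frontier upper_half_plane" for p u
    using dist_mult_dist_ge_on_boundary that by (simp add: frontier_upper_half_plane)
  have "0 < (m $ 2)\<^sup>2 - (norm v)\<^sup>2"
    using assms by (simp add: power_strict_mono)
  moreover have "m - (m $ 2) *\<^sub>R e2 \<in> frontier upper_half_plane"
    by (simp add: frontier_upper_half_plane e2_def)
  moreover have "dist (m - norm v *\<^sub>R e2) (m - (m $ 2) *\<^sub>R e2) * dist (m + norm v *\<^sub>R e2) (m - (m $ 2) *\<^sub>R e2)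
                   \<le> (m $ 2)\<^sup>2 - (norm v)\<^sup>2"
    using dist_mult_dist_at_foot_vertical[of m "norm v"] calculation(1) by simp
  ultimately show ?thesis
    using lower[of _ v] lower[of _ "norm v *\<^sub>R e2"]
    by (intro sic_metric_le_sic_metric) (auto simp: dist_diff_add e2_def)
qed

theorem lemma3p11:
  fixes x y :: "real^2"
  assumes "x \<in> upper_half_plane" and "y \<in> upper_half_plane"
    and "(1/2) *\<^sub>R (x + y) - (dist x y / 2) *\<^sub>R e2 \<in> upper_half_plane"
  shows "sic_metric upper_half_plane ((1/2) *\<^sub>R (x + y) - (dist x y / 2) *\<^sub>R e1)
                                     ((1/2) *\<^sub>R (x + y) + (dist x y / 2) *\<^sub>R e1)
           \<le> sic_metric upper_half_plane x y
         \<and> sic_metric upper_half_plane x y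
           \<le> sic_metric upper_half_plane ((1/2) *\<^sub>R (x + y) - (dist x y / 2) *\<^sub>R e2)
                                        ((1/2) *\<^sub>R (x + y) + (dist x y / 2) *\<^sub>R e2)"
proof -
  define m where "m = (1/2) *\<^sub>R (x + y)"
  define v where "v = (1/2) *\<^sub>R (y - x)"
  have xy: "x = m - v" "y = m + v"
    by (simp_all add: m_def v_def vec_eq_iff field_simps)
  have r: "dist x y / 2 = norm v"
    by (simp add: v_def dist_norm norm_minus_commute)
  have "norm v < m $ 2"
    using assms(3) by (simp add: upper_half_plane_def m_def r e2_def)
  then have "sic_metric upper_half_plane (m - norm v *\<^sub>R e1) (m + norm v *\<^sub>R e1)
               \<le> sic_metric upper_half_plane x y
             \<and> sic_metric upper_half_plane x y
               \<le> sic_metric upper_half_plane (m - norm v *\<^sub>R e2) (m + norm v *\<^sub>R e2)"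
    unfolding xy
    by (blast intro: sic_metric_upper_half_plane_horizontal_le sic_metric_upper_half_plane_le_vertical)
  then show ?thesis
    by (simp only: m_def r)
qed

end
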